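(* If a UCPT$(n)$-map $T$ has an exact factorization through $M_n(\mathbb{C})\otimes M_k(\mathbb{C})$ for some integer $k\geq1$, then $T$ is factorizable of degree $k$.
   Context: A UCPT$(n)$-map is a unital completely positive trace-preserving linear map on $M_n(\mathbb{C})$; $\tau_k$ is the normalized trace on $M_k(\mathbb{C})$. $T$ has an exact factorization through $M_n(\mathbb{C})\otimes M_k(\mathbb{C})$ if there is a unitary $u\in M_n(\mathbb{C})\otimes M_k(\mathbb{C})$ with $T(x)=(\mathrm{id}_n\otimes\tau_k)(u^*(x\otimes1_k)u)$ for all $x\in M_n(\mathbb{C})$. $T$ is factorizable of degree $k$ if $T\otimes S_k\in\mathrm{conv}(\mathrm{Aut}(M_n(\mathbb{C})\otimes M_k(\mathbb{C})))$, where $S_k(y)=\tau_k(y)1_k$, $\mathrm{Aut}$ consists of the maps $x\mapsto u^*xu$ with $u$ unitary, and $\mathrm{conv}$ is convex hull. *)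

theory Defs
  imports "Jordan_Normal_Form.Matrix"
begin

text \<open>M_n(C) (x) M_k(C) is identified with M_(n*k)(C) via the Kronecker convention:
  the basis index (i,a) with i<n, a<k corresponds to i*k+a.\<close>

definition mtrace :: "complex mat \<Rightarrow> complex" where
  "mtrace A = (\<Sum>i<dim_row A. A $$ (i,i))"

definition madj :: "complex mat \<Rightarrow> complex mat" where
  "madj A = mat (dim_col A) (dim_row A) (\<lambda>(i,j). cnj (A $$ (j,i)))"

definition unitary_mat :: "nat \<Rightarrow> complex mat \<Rightarrow> bool" where
  "unitary_mat d U \<longleftrightarrow> U \<in> carrier_mat d d \<and> madj U * U = 1\<^sub>m d \<and> U * madj U = 1\<^sub>m d"

definition kron :: "complex mat \<Rightarrow> complex mat \<Rightarrow> complex mat" where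
  "kron A B = mat (dim_row A * dim_row B) (dim_col A * dim_col B)
     (\<lambda>(p,q). A $$ (p div dim_row B, q div dim_col B) * B $$ (p mod dim_row B, q mod dim_col B))"

definition psd :: "nat \<Rightarrow> complex mat \<Rightarrow> bool" where
  "psd d A \<longleftrightarrow> A \<in> carrier_mat d d \<and> madj A = A \<and>
     (\<forall>v :: nat \<Rightarrow> complex. 0 \<le> Re (\<Sum>i<d. \<Sum>j<d. cnj (v i) * A $$ (i,j) * v j))"

definition munit :: "nat \<Rightarrow> nat \<Rightarrow> nat \<Rightarrow> complex mat" where
  "munit d i j = mat d d (\<lambda>(p,q). if p = i \<and> q = j then 1 else 0)"

definition map_tensor :: "nat \<Rightarrow> nat \<Rightarrow> (complex mat \<Rightarrow> complex mat) \<Rightarrow> (complex mat \<Rightarrow> complex mat)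
    \<Rightarrow> complex mat \<Rightarrow> complex mat" where
  "map_tensor n k A B Y = mat (n*k) (n*k) (\<lambda>(p,q).
     \<Sum>i<n. \<Sum>j<n. \<Sum>a<k. \<Sum>b<k.
       Y $$ (i*k+a, j*k+b) * kron (A (munit n i j)) (B (munit k a b)) $$ (p,q))"

definition id_map :: "complex mat \<Rightarrow> complex mat" where
  "id_map x = x"

definition lin_map :: "nat \<Rightarrow> (complex mat \<Rightarrow> complex mat) \<Rightarrow> bool" where
  "lin_map d T \<longleftrightarrow> (\<forall>x \<in> carrier_mat d d. T x \<in> carrier_mat d d) \<and>
     (\<forall>x \<in> carrier_mat d d. \<forall>y \<in> carrier_mat d d. T (x + y) = T x + T y) \<and>
     (\<forall>c. \<forall>x \<in> carrier_mat d d. T (c \<cdot>\<^sub>m x) = c \<cdot>\<^sub>m T x)"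

definition completely_positive :: "nat \<Rightarrow> (complex mat \<Rightarrow> complex mat) \<Rightarrow> bool" where
  "completely_positive n T \<longleftrightarrow>
     (\<forall>m \<ge> 1. \<forall>X. psd (n*m) X \<longrightarrow> psd (n*m) (map_tensor n m T id_map X))"

definition UCPT :: "nat \<Rightarrow> (complex mat \<Rightarrow> complex mat) \<Rightarrow> bool" where
  "UCPT n T \<longleftrightarrow> lin_map n T \<and> T (1\<^sub>m n) = 1\<^sub>m n \<and> completely_positive n T \<and>
     (\<forall>x \<in> carrier_mat n n. mtrace (T x) = mtrace x)"

definition ptrace_norm :: "nat \<Rightarrow> nat \<Rightarrow> complex mat \<Rightarrow> complex mat" where
  "ptrace_norm n k Y = mat n n (\<lambda>(i,j). (\<Sum>a<k. Y $$ (i*k+a, j*k+a)) / of_nat k)"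

definition exact_factorization :: "nat \<Rightarrow> nat \<Rightarrow> (complex mat \<Rightarrow> complex mat) \<Rightarrow> bool" where
  "exact_factorization n k T \<longleftrightarrow> (\<exists>u. unitary_mat (n*k) u \<and>
     (\<forall>x \<in> carrier_mat n n. T x = ptrace_norm n k (madj u * kron x (1\<^sub>m k) * u)))"

definition S_map :: "nat \<Rightarrow> complex mat \<Rightarrow> complex mat" where
  "S_map k y = (mtrace y / of_nat k) \<cdot>\<^sub>m 1\<^sub>m k"

text \<open>Membership of a map on M_d in the convex hull of Aut(M_d) = {x \<mapsto> u^* x u}:
  a finite convex combination, maps compared on M_d.\<close>
definition in_conv_Aut :: "nat \<Rightarrow> (complex mat \<Rightarrow> complex mat) \<Rightarrow> bool" where
  "in_conv_Aut d \<Phi> \<longleftrightarrow> (\<exists>(ws :: real list) us. length ws = length us \<and>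
     (\<forall>w \<in> set ws. 0 \<le> w) \<and> sum_list ws = 1 \<and> (\<forall>u \<in> set us. unitary_mat d u) \<and>
     (\<forall>Y \<in> carrier_mat d d. \<Phi> Y = mat d d (\<lambda>(p,q).
        \<Sum>l<length ws. complex_of_real (ws ! l) * (madj (us ! l) * Y * us ! l) $$ (p,q))))"

definition factorizable_deg :: "nat \<Rightarrow> nat \<Rightarrow> (complex mat \<Rightarrow> complex mat) \<Rightarrow> bool" where
  "factorizable_deg n k T \<longleftrightarrow> in_conv_Aut (n*k) (map_tensor n k T (S_map k))"

end

theory Submission
  imports Defs "Jordan_Normal_Form.Determinant"
begin

text \<open>Write \<open>P = id\<^sub>n \<otimes> \<tau>\<^sub>k\<close> and \<open>E = id\<^sub>n \<otimes> S\<^sub>k\<close>, so that \<open>E Y = P Y \<otimes> 1\<^sub>k\<close> and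
  \<open>(T \<otimes> S\<^sub>k) Y = T (P Y) \<otimes> 1\<^sub>k\<close>. The exact factorization gives \<open>T (P Y) = P (u\<^sup>* (P Y \<otimes> 1\<^sub>k) u)\<close>,
  hence \<open>T \<otimes> S\<^sub>k = E \<circ> Ad u \<circ> E\<close>. The conditional expectation \<open>E\<close> is the uniform average of
  the conjugations by the \<open>k\<^sup>2\<close> Weyl unitaries \<open>1\<^sub>n \<otimes> X\<^sup>a Z\<^sup>b\<close> (shift and clock on \<open>\<complex>\<^sup>k\<close>),
  because the characters \<open>b \<mapsto> \<omega>\<^sup>b\<^sup>p\<close> are orthogonal. Therefore \<open>T \<otimes> S\<^sub>k\<close> is the uniform
  average of the conjugations by the unitaries \<open>W u W'\<close>, \<open>W, W'\<close> Weyl unitaries.\<close>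

lemma madj_carrier_mat [simp]: "A \<in> carrier_mat a b \<Longrightarrow> madj A \<in> carrier_mat b a"
  unfolding madj_def by auto

lemma dim_madj [simp]: "dim_row (madj A) = dim_col A" "dim_col (madj A) = dim_row A"
  unfolding madj_def by auto

lemma index_madj [simp]: "i < dim_col A \<Longrightarrow> j < dim_row A \<Longrightarrow> madj A $$ (i,j) = cnj (A $$ (j,i))"
  unfolding madj_def by auto

lemma madj_mult:
  assumes "A \<in> carrier_mat a b" "B \<in> carrier_mat b c"
  shows "madj (A * B) = madj B * madj A"
  using assms by (intro eq_matI) (auto simp: scalar_prod_def mult.commute)

lemma madj_conj_mult:
  assumes "A \<in> carrier_mat d d" "B \<in> carrier_mat d d" "Y \<in> carrier_mat d d"
  shows "madj B * (madj A * Y * A) * B = madj (A * B) * Y * (A * B)"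
  using assms
  by (simp add: madj_mult[of _ d d _ d] assoc_mult_mat[of _ d d _ d _ d] mult_carrier_mat[of _ d d _ d])

lemma conj_carrier_mat [simp]:
  "U \<in> carrier_mat d d \<Longrightarrow> Y \<in> carrier_mat d d \<Longrightarrow> madj U * Y * U \<in> carrier_mat d d"
  by (meson madj_carrier_mat mult_carrier_mat)

lemma unitary_mat_carrier: "unitary_mat d U \<Longrightarrow> U \<in> carrier_mat d d"
  unfolding unitary_mat_def by simp

lemma unitary_mult:
  assumes A: "unitary_mat d A" and B: "unitary_mat d B"
  shows "unitary_mat d (A * B)"
proof -
  have carr: "A \<in> carrier_mat d d" "B \<in> carrier_mat d d" "madj A \<in> carrier_mat d d" "madj B \<in> carrier_mat d d"
    using A B unfolding unitary_mat_def by auto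
  have "madj (A * B) * (A * B) = madj B * (madj A * A) * B"
    using carr
    by (simp add: madj_mult[of _ d d _ d] assoc_mult_mat[of _ d d _ d _ d] mult_carrier_mat[of _ d d _ d])
  moreover have "A * B * madj (A * B) = A * (B * madj B) * madj A"
    using carr
    by (simp add: madj_mult[of _ d d _ d] assoc_mult_mat[of _ d d _ d _ d] mult_carrier_mat[of _ d d _ d])
  ultimately show ?thesis
    using A B carr unfolding unitary_mat_def by auto
qed

definition mat_lincomb :: "nat \<Rightarrow> 'i set \<Rightarrow> ('i \<Rightarrow> complex) \<Rightarrow> ('i \<Rightarrow> complex mat) \<Rightarrow> complex mat" where
  "mat_lincomb d F c M = mat d d (\<lambda>rs. \<Sum>x\<in>F. c x * M x $$ rs)"

lemma mat_lincomb_carrier [simp]: "mat_lincomb d F c M \<in> carrier_mat d d"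
  unfolding mat_lincomb_def by simp

lemma dim_mat_lincomb [simp]:
  "dim_row (mat_lincomb d F c M) = d" "dim_col (mat_lincomb d F c M) = d"
  unfolding mat_lincomb_def by simp_all

lemma index_mat_lincomb [simp]:
  "r < d \<Longrightarrow> s < d \<Longrightarrow> mat_lincomb d F c M $$ (r,s) = (\<Sum>x\<in>F. c x * M x $$ (r,s))"
  unfolding mat_lincomb_def by simp

lemma lin_map_mat_lincomb:
  assumes T: "lin_map d T" and "finite F" and "\<And>x. x \<in> F \<Longrightarrow> M x \<in> carrier_mat d d"
  shows "T (mat_lincomb d F c M) = mat_lincomb d F c (\<lambda>x. T (M x))"
  using assms(2,3)
proof (induction F rule: finite_induct)
  case empty
  have T0: "T (0\<^sub>m d d) \<in> carrier_mat d d"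
    using T unfolding lin_map_def by simp
  have "T (0\<^sub>m d d) = T (0 \<cdot>\<^sub>m 0\<^sub>m d d)"
    by simp
  also have "\<dots> = 0 \<cdot>\<^sub>m T (0\<^sub>m d d)"
    using T zero_carrier_mat unfolding lin_map_def by blast
  also have "\<dots> = 0\<^sub>m d d"
    using T0 by (intro eq_matI) auto
  finally show ?case
    by (simp add: zero_mat_def mat_lincomb_def)
next
  case (insert x F)
  have carr: "M x \<in> carrier_mat d d" "T (M x) \<in> carrier_mat d d"
    using insert.prems T unfolding lin_map_def by auto
  have split: "mat_lincomb d (insert x F) c N = mat_lincomb d F c N + c x \<cdot>\<^sub>m N x"
    if "N x \<in> carrier_mat d d" for N
    using insert.hyps that by (intro eq_matI) (auto simp: add.commute)
  have "T (mat_lincomb d F c M + c x \<cdot>\<^sub>m M x) = T (mat_lincomb d F c M) + c x \<cdot>\<^sub>m T (M x)"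
    using T carr unfolding lin_map_def by auto
  with insert show ?case
    by (simp add: split carr)
qed

lemma mat_eq_lincomb_munit:
  assumes "X \<in> carrier_mat d d"
  shows "X = mat_lincomb d ({..<d} \<times> {..<d}) (\<lambda>(i,j). X $$ (i,j)) (\<lambda>(i,j). munit d i j)"
proof (rule eq_matI)
  fix r s
  assume "r < dim_row (mat_lincomb d ({..<d} \<times> {..<d}) (\<lambda>(i,j). X $$ (i,j)) (\<lambda>(i,j). munit d i j))"
    and "s < dim_col (mat_lincomb d ({..<d} \<times> {..<d}) (\<lambda>(i,j). X $$ (i,j)) (\<lambda>(i,j). munit d i j))"
  then have rs: "r < d" "s < d"
    by simp_all
  have "mat_lincomb d ({..<d} \<times> {..<d}) (\<lambda>(i,j). X $$ (i,j)) (\<lambda>(i,j). munit d i j) $$ (r,s)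
      = (\<Sum>x\<in>{..<d} \<times> {..<d}. if x = (r,s) then X $$ x else 0)"
    using rs unfolding index_mat_lincomb[OF rs] by (intro sum.cong) (auto simp: munit_def split: if_splits)
  with rs show "X $$ (r,s) = mat_lincomb d ({..<d} \<times> {..<d}) (\<lambda>(i,j). X $$ (i,j)) (\<lambda>(i,j). munit d i j) $$ (r,s)"
    by (simp add: sum.delta)
qed (use assms in simp_all)

lemma lin_map_index:
  assumes T: "lin_map d T" and X: "X \<in> carrier_mat d d" and "r < d" "s < d"
  shows "T X $$ (r,s) = (\<Sum>i<d. \<Sum>j<d. X $$ (i,j) * T (munit d i j) $$ (r,s))"
proof -
  have "T X = mat_lincomb d ({..<d} \<times> {..<d}) (\<lambda>(i,j). X $$ (i,j)) (\<lambda>(i,j). T (munit d i j))"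
    by (subst mat_eq_lincomb_munit[OF X], subst lin_map_mat_lincomb[OF T])
       (auto simp: munit_def split_def)
  with assms show ?thesis by (simp add: sum.cartesian_product split_def)
qed

lemma mat_lincomb_cong:
  "(\<And>x. x \<in> F \<Longrightarrow> M x = N x) \<Longrightarrow> mat_lincomb d F c M = mat_lincomb d F c N"
  unfolding mat_lincomb_def by (intro eq_matI) auto

lemma lin_map_mult_mat:
  assumes A: "A \<in> carrier_mat d d" and B: "B \<in> carrier_mat d d"
  shows "lin_map d (\<lambda>X. A * X * B)"
  unfolding lin_map_def
proof (intro conjI ballI allI)
  fix X Y :: "complex mat" and c :: complex
  assume X: "X \<in> carrier_mat d d" and Y: "Y \<in> carrier_mat d d"
  show "A * X * B \<in> carrier_mat d d"
    using A X B by simp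
  show "A * (X + Y) * B = A * X * B + A * Y * B"
    using A X Y B by (simp add: mult_add_distrib_mat[of A d d] add_mult_distrib_mat[of _ d d _ B d])
  show "A * (c \<cdot>\<^sub>m X) * B = c \<cdot>\<^sub>m (A * X * B)"
    using A X B by (simp add: mult_smult_distrib[of A d d] mult_smult_assoc_mat[of _ d d B d])
qed

lemma mult_mat_lincomb:
  assumes "finite F" "\<And>x. x \<in> F \<Longrightarrow> M x \<in> carrier_mat d d"
    and "A \<in> carrier_mat d d" "B \<in> carrier_mat d d"
  shows "A * mat_lincomb d F c M * B = mat_lincomb d F c (\<lambda>x. A * M x * B)"
  using lin_map_mat_lincomb[OF lin_map_mult_mat[OF assms(3,4)] assms(1,2)] .

lemma mat_lincomb_mat_lincomb:
  "mat_lincomb d J c (\<lambda>j. mat_lincomb d I (e j) (M j))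
     = mat_lincomb d (J \<times> I) (\<lambda>(j,i). c j * e j i) (\<lambda>(j,i). M j i)"
  by (intro eq_matI) (simp_all add: sum.cartesian_product split_def sum_distrib_left mult.assoc)

definition mixed_conj :: "nat \<Rightarrow> 'i set \<Rightarrow> ('i \<Rightarrow> real) \<Rightarrow> ('i \<Rightarrow> complex mat) \<Rightarrow> complex mat \<Rightarrow> complex mat" where
  "mixed_conj d J w U Y = mat_lincomb d J (\<lambda>j. complex_of_real (w j)) (\<lambda>j. madj (U j) * Y * U j)"

lemma mixed_conj_carrier [simp]: "mixed_conj d J w U Y \<in> carrier_mat d d"
  unfolding mixed_conj_def by simp

lemma dim_mixed_conj [simp]: "dim_row (mixed_conj d J w U Y) = d" "dim_col (mixed_conj d J w U Y) = d"
  unfolding mixed_conj_def by simp_all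

lemma index_mixed_conj:
  "r < d \<Longrightarrow> s < d \<Longrightarrow>
    mixed_conj d J w U Y $$ (r,s) = (\<Sum>j\<in>J. complex_of_real (w j) * (madj (U j) * Y * U j) $$ (r,s))"
  unfolding mixed_conj_def by simp

lemma conj_mixed_conj:
  assumes "finite I" "\<And>i. i \<in> I \<Longrightarrow> V i \<in> carrier_mat d d"
    and "u \<in> carrier_mat d d" "Y \<in> carrier_mat d d"
  shows "madj u * mixed_conj d I v V Y * u = mixed_conj d I v (\<lambda>i. V i * u) Y"
  using assms unfolding mixed_conj_def
  by (subst mult_mat_lincomb) (auto intro!: mat_lincomb_cong madj_conj_mult)

lemma mixed_conj_mixed_conj:
  assumes "finite I" "\<And>i. i \<in> I \<Longrightarrow> V i \<in> carrier_mat d d"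
    and "\<And>j. j \<in> J \<Longrightarrow> U j \<in> carrier_mat d d" "Y \<in> carrier_mat d d"
  shows "mixed_conj d J w U (mixed_conj d I v V Y)
       = mixed_conj d (J \<times> I) (\<lambda>(j,i). w j * v i) (\<lambda>(j,i). V i * U j) Y"
proof -
  have "mixed_conj d J w U (mixed_conj d I v V Y)
      = mat_lincomb d J (\<lambda>j. complex_of_real (w j)) (\<lambda>j. mixed_conj d I v (\<lambda>i. V i * U j) Y)"
    unfolding mixed_conj_def[of d J] using assms
    by (intro mat_lincomb_cong conj_mixed_conj) auto
  then show ?thesis
    unfolding mixed_conj_def mat_lincomb_mat_lincomb by (simp add: split_def)
qed

lemma in_conv_AutI:
  assumes J: "finite J" and w: "\<And>j. j \<in> J \<Longrightarrow> 0 \<le> w j" "sum w J = 1"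
    and U: "\<And>j. j \<in> J \<Longrightarrow> unitary_mat d (U j)"
    and \<Phi>: "\<And>Y. Y \<in> carrier_mat d d \<Longrightarrow> \<Phi> Y = mixed_conj d J w U Y"
  shows "in_conv_Aut d \<Phi>"
proof -
  obtain xs where xs: "set xs = J" "distinct xs"
    using finite_distinct_list[OF J] by blast
  have sum_nth: "(\<Sum>l<length xs. g (xs ! l)) = sum g J" for g :: "_ \<Rightarrow> 'c::comm_monoid_add"
  proof -
    have "(\<Sum>l<length xs. g (xs ! l)) = sum_list (map g xs)"
      by (simp add: sum_list_sum_nth lessThan_atLeast0)
    also have "\<dots> = sum g J"
      using xs by (simp add: sum_list_distinct_conv_sum_set)
    finally show ?thesis .
  qed
  show ?thesis
    unfolding in_conv_Aut_def
  proof (intro exI conjI ballI)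
    fix Y :: "complex mat"
    assume "Y \<in> carrier_mat d d"
    then show "\<Phi> Y = mat d d (\<lambda>(p,q). \<Sum>l<length (map w xs).
        complex_of_real (map w xs ! l) * (madj (map U xs ! l) * Y * map U xs ! l) $$ (p,q))"
      unfolding \<Phi>[OF \<open>Y \<in> carrier_mat d d\<close>] mixed_conj_def mat_lincomb_def
      by (intro eq_matI) (auto simp: sum_nth[symmetric])
  qed (use xs w U in \<open>auto simp: sum_list_distinct_conv_sum_set\<close>)
qed

lemma in_conv_Aut_mixed_conj_comp:
  assumes "finite I" "\<And>i. i \<in> I \<Longrightarrow> 0 \<le> v i" "sum v I = 1" "\<And>i. i \<in> I \<Longrightarrow> unitary_mat d (V i)"
    and "finite J" "\<And>j. j \<in> J \<Longrightarrow> 0 \<le> w j" "sum w J = 1" "\<And>j. j \<in> J \<Longrightarrow> unitary_mat d (U j)"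
    and u: "unitary_mat d u"
    and \<Phi>: "\<And>Y. Y \<in> carrier_mat d d \<Longrightarrow> \<Phi> Y = mixed_conj d J w U (madj u * mixed_conj d I v V Y * u)"
  shows "in_conv_Aut d \<Phi>"
proof (rule in_conv_AutI[where J = "J \<times> I" and w = "\<lambda>(j,i). w j * v i" and U = "\<lambda>(j,i). V i * u * U j"])
  fix Y :: "complex mat"
  assume Y: "Y \<in> carrier_mat d d"
  have carriers: "u \<in> carrier_mat d d" "\<And>i. i \<in> I \<Longrightarrow> V i * u \<in> carrier_mat d d"
    "\<And>j. j \<in> J \<Longrightarrow> U j \<in> carrier_mat d d"
    using assms by (auto intro: mult_carrier_mat unitary_mat_carrier)
  have "mixed_conj d J w U (madj u * mixed_conj d I v V Y * u) = mixed_conj d J w U (mixed_conj d I v (\<lambda>i. V i * u) Y)"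
    using assms Y carriers(1) by (simp add: conj_mixed_conj unitary_mat_carrier)
  also have "\<dots> = mixed_conj d (J \<times> I) (\<lambda>(j,i). w j * v i) (\<lambda>(j,i). V i * u * U j) Y"
    using assms Y carriers by (simp add: mixed_conj_mixed_conj)
  finally show "\<Phi> Y = mixed_conj d (J \<times> I) (\<lambda>(j,i). w j * v i) (\<lambda>(j,i). V i * u * U j) Y"
    using \<Phi>[OF Y] by simp
qed (use assms in \<open>auto simp: sum.cartesian_product' sum_distrib_left[symmetric] intro!: unitary_mult\<close>)

definition monomial_mat :: "nat \<Rightarrow> (nat \<Rightarrow> nat) \<Rightarrow> (nat \<Rightarrow> complex) \<Rightarrow> complex mat" where
  "monomial_mat d \<sigma> c = mat d d (\<lambda>(r,q). if r = \<sigma> q then c q else 0)"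

lemma monomial_mat_carrier [simp]: "monomial_mat d \<sigma> c \<in> carrier_mat d d"
  unfolding monomial_mat_def by simp

lemma index_conj_monomial_mat:
  assumes \<sigma>: "\<And>q. q < d \<Longrightarrow> \<sigma> q < d" and Z: "Z \<in> carrier_mat d d" and "p < d" "q < d"
  shows "(madj (monomial_mat d \<sigma> c) * Z * monomial_mat d \<sigma> c) $$ (p,q) = cnj (c p) * Z $$ (\<sigma> p, \<sigma> q) * c q"
proof -
  have left: "(madj (monomial_mat d \<sigma> c) * Z) $$ (p,r) = cnj (c p) * Z $$ (\<sigma> p, r)" if "r < d" for r
  proof -
    have "(madj (monomial_mat d \<sigma> c) * Z) $$ (p,r) = (\<Sum>i<d. cnj (if i = \<sigma> p then c p else 0) * Z $$ (i,r))"
      using assms that by (simp add: monomial_mat_def scalar_prod_def lessThan_atLeast0)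
    also have "\<dots> = (\<Sum>i<d. if i = \<sigma> p then cnj (c p) * Z $$ (i,r) else 0)"
      by (intro sum.cong) auto
    finally show ?thesis
      using assms by simp
  qed
  have "(madj (monomial_mat d \<sigma> c) * Z * monomial_mat d \<sigma> c) $$ (p,q)
      = (\<Sum>r<d. (madj (monomial_mat d \<sigma> c) * Z) $$ (p,r) * (if r = \<sigma> q then c q else 0))"
    using assms by (simp add: monomial_mat_def scalar_prod_def lessThan_atLeast0)
  also have "\<dots> = (\<Sum>r<d. if r = \<sigma> q then cnj (c p) * Z $$ (\<sigma> p, r) * c q else 0)"
    by (intro sum.cong) (auto simp: left)
  finally show ?thesis
    using assms by simp
qed

lemma unitary_monomial_mat:
  assumes \<sigma>: "\<And>q. q < d \<Longrightarrow> \<sigma> q < d" "inj_on \<sigma> {..<d}"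
    and c: "\<And>q. q < d \<Longrightarrow> cnj (c q) * c q = 1"
  shows "unitary_mat d (monomial_mat d \<sigma> c)"
proof -
  let ?M = "monomial_mat d \<sigma> c"
  have left_inv: "madj ?M * ?M = 1\<^sub>m d"
  proof (rule eq_matI)
    fix p q
    assume "p < dim_row (1\<^sub>m d :: complex mat)" "q < dim_col (1\<^sub>m d :: complex mat)"
    then have pq: "p < d" "q < d"
      by simp_all
    have "(madj ?M * ?M) $$ (p,q) = (madj ?M * 1\<^sub>m d * ?M) $$ (p,q)"
      by (metis madj_carrier_mat monomial_mat_carrier right_mult_one_mat)
    also have "\<dots> = cnj (c p) * 1\<^sub>m d $$ (\<sigma> p, \<sigma> q) * c q"
      using index_conj_monomial_mat[OF \<sigma>(1) one_carrier_mat pq] .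
    also have "\<dots> = (if p = q then 1 else 0)"
      using \<sigma> pq c[OF pq(1)] inj_onD[OF \<sigma>(2), of p q] by auto
    finally show "(madj ?M * ?M) $$ (p,q) = 1\<^sub>m d $$ (p,q)"
      using pq by simp
  qed (simp_all add: monomial_mat_def)
  have "?M * madj ?M = 1\<^sub>m d"
    by (rule mat_mult_left_right_inverse[OF _ _ left_inv]) simp_all
  with left_inv show ?thesis
    unfolding unitary_mat_def by simp
qed

lemma sum_roots_unity_orthogonal:
  fixes k p q :: nat
  assumes p: "p < k" and q: "q < k"
  shows "(\<Sum>b<k. cnj (cis (2*pi/k) ^ (b*p)) * cis (2*pi/k) ^ (b*q)) = (if p = q then of_nat k else 0)"
proof -
  define \<omega> where "\<omega> = cis (2*pi/k)"
  define z where "z = cnj (\<omega> ^ p) * \<omega> ^ q"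
  have unit: "cnj (\<omega> ^ j) * \<omega> ^ j = 1" for j
    unfolding \<omega>_def by (simp add: DeMoivre cis_cnj cis_mult)
  have terms: "cnj (\<omega> ^ (b*p)) * \<omega> ^ (b*q) = z ^ b" for b
    unfolding z_def power_mult_distrib complex_cnj_power power_mult[symmetric] by (simp add: mult.commute)
  have sum_z: "(\<Sum>b<k. cnj (cis (2*pi/k) ^ (b*p)) * cis (2*pi/k) ^ (b*q)) = (\<Sum>b<k. z ^ b)"
    unfolding \<omega>_def[symmetric] by (intro sum.cong refl terms)
  show ?thesis
  proof (cases "p = q")
    case True
    then have "z = 1"
      using unit[of p] by (simp add: z_def)
    with True show ?thesis
      unfolding sum_z by simp
  next
    case False
    have "inj_on (\<lambda>j. cis (2 * pi * real j / real k)) {..<k}"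
      using p bij_betw_roots_unity[of k] by (simp add: bij_betw_def)
    moreover have "\<omega> ^ j = cis (2 * pi * real j / real k)" for j
      unfolding \<omega>_def by (simp add: DeMoivre mult.commute)
    ultimately have "\<omega> ^ p \<noteq> \<omega> ^ q"
      using False p q by (auto dest: inj_onD)
    moreover have "\<omega> ^ p * z = (cnj (\<omega> ^ p) * \<omega> ^ p) * \<omega> ^ q"
      unfolding z_def by (simp only: ac_simps)
    then have "\<omega> ^ q = \<omega> ^ p * z"
      by (simp only: unit mult_1_left)
    ultimately have z_neq_1: "z \<noteq> 1"
      by auto
    have "\<omega> ^ k = 1"
      using p unfolding \<omega>_def by (simp add: DeMoivre)
    moreover have "z ^ k = cnj ((\<omega> ^ k) ^ p) * (\<omega> ^ k) ^ q"
      unfolding z_def power_mult_distrib complex_cnj_power power_mult[symmetric] by (simp add: mult.commute)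
    ultimately have "z ^ k = 1"
      by simp
    with False z_neq_1 show ?thesis
      unfolding sum_z by (simp add: geometric_sum)
  qed
qed

lemma mod_add_right_cancel_nat:
  fixes x y a k :: nat
  assumes "(x + a) mod k = (y + a) mod k"
  shows "x mod k = y mod k"
proof -
  have "(int x + int a) mod int k = (int y + int a) mod int k"
    using assms by (metis of_nat_add of_nat_mod)
  then have "(int x + int a - int a) mod int k = (int y + int a - int a) mod int k"
    by (metis mod_diff_left_eq)
  then show ?thesis
    by (metis add_diff_cancel_right' of_nat_eq_iff of_nat_mod)
qed

lemma sum_mod_shift:
  fixes g :: "nat \<Rightarrow> 'a::comm_monoid_add"
  shows "(\<Sum>a<k. g ((c + a) mod k)) = (\<Sum>a<k. g a)"
proof -
  have inj: "inj_on (\<lambda>a. (c + a) mod k) {..<k}"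
    by (rule inj_onI) (metis add.commute lessThan_iff mod_add_right_cancel_nat mod_less)
  then have "(\<lambda>a. (c + a) mod k) ` {..<k} = {..<k}"
    by (intro endo_inj_surj) auto
  with inj have "bij_betw (\<lambda>a. (c + a) mod k) {..<k} {..<k}"
    unfolding bij_betw_def by simp
  then show ?thesis
    by (rule sum.reindex_bij_betw)
qed

definition cyclic_shift :: "nat \<Rightarrow> nat \<Rightarrow> nat \<Rightarrow> nat" where
  "cyclic_shift k a q = q div k * k + (q mod k + a) mod k"

lemma cyclic_shift_div [simp]: "cyclic_shift k a q div k = q div k"
  unfolding cyclic_shift_def by (cases "k = 0") simp_all

lemma cyclic_shift_mod [simp]: "cyclic_shift k a q mod k = (q mod k + a) mod k"
  unfolding cyclic_shift_def by simp

lemma cyclic_shift_less: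
  assumes "q < n * k"
  shows "cyclic_shift k a q < n * k"
proof -
  have "q div k < n"
    using assms by (simp add: less_mult_imp_div_less)
  then have "(q div k + 1) * k \<le> n * k"
    by (intro mult_le_mono1) simp
  moreover have "(q mod k + a) mod k < k"
    using assms by (cases k) simp_all
  ultimately show ?thesis
    unfolding cyclic_shift_def by simp
qed

lemma inj_cyclic_shift: "inj (cyclic_shift k a)"
proof (rule injI)
  fix p q
  assume eq: "cyclic_shift k a p = cyclic_shift k a q"
  then have "p div k = q div k"
    by (metis cyclic_shift_div)
  moreover have "p mod k = q mod k"
    using eq mod_add_right_cancel_nat[of "p mod k" a k "q mod k"] by (metis cyclic_shift_mod mod_mod_trivial)
  ultimately show "p = q"
    by (metis div_mult_mod_eq)
qed

text \<open>\<open>weyl n k a b\<close> is \<open>1\<^sub>n \<otimes> X\<^sup>a Z\<^sup>b\<close> on \<open>\<complex>\<^sup>n \<otimes> \<complex>\<^sup>k\<close>, with \<open>X\<close> the cyclic shift and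
  \<open>Z = diag (\<omega>\<^sup>j)\<close>, \<open>\<omega> = cis (2\<pi>/k)\<close>, the clock matrix.\<close>

definition weyl :: "nat \<Rightarrow> nat \<Rightarrow> nat \<Rightarrow> nat \<Rightarrow> complex mat" where
  "weyl n k a b = monomial_mat (n*k) (cyclic_shift k a) (\<lambda>q. cis (2*pi/k) ^ (b * (q mod k)))"

lemma unitary_weyl: "unitary_mat (n*k) (weyl n k a b)"
  unfolding weyl_def
  by (rule unitary_monomial_mat)
     (auto intro: cyclic_shift_less inj_on_subset[OF inj_cyclic_shift] simp: DeMoivre cis_cnj cis_mult)

lemma index_kron_one_mat:
  assumes "A \<in> carrier_mat n n" "p < n * k" "q < n * k"
  shows "kron A (1\<^sub>m k) $$ (p,q) = (if p mod k = q mod k then A $$ (p div k, q div k) else 0)"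
proof -
  have "0 < k"
    using assms by (cases k) simp_all
  with assms show ?thesis
    by (simp add: kron_def)
qed

lemma ptrace_norm_carrier [simp]: "ptrace_norm n k Y \<in> carrier_mat n n"
  unfolding ptrace_norm_def by simp

definition weyl_twirl :: "nat \<Rightarrow> nat \<Rightarrow> complex mat \<Rightarrow> complex mat" where
  "weyl_twirl n k = mixed_conj (n*k) ({..<k} \<times> {..<k}) (\<lambda>_. 1 / (real k * real k)) (\<lambda>(a,b). weyl n k a b)"

lemma weyl_twirl_carrier [simp]: "weyl_twirl n k Y \<in> carrier_mat (n*k) (n*k)"
  unfolding weyl_twirl_def by simp

lemma in_conv_Aut_weyl_twirl_comp:
  assumes "k \<ge> 1" and "unitary_mat (n*k) u"
    and "\<And>Y. Y \<in> carrier_mat (n*k) (n*k) \<Longrightarrow> \<Phi> Y = weyl_twirl n k (madj u * weyl_twirl n k Y * u)"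
  shows "in_conv_Aut (n*k) \<Phi>"
  using assms unfolding weyl_twirl_def
  by (intro in_conv_Aut_mixed_conj_comp) (auto simp: unitary_weyl)

lemma kron_ptrace_norm_eq_weyl_twirl:
  assumes Z: "Z \<in> carrier_mat (n*k) (n*k)"
  shows "kron (ptrace_norm n k Z) (1\<^sub>m k) = weyl_twirl n k Z"
  unfolding weyl_twirl_def
proof (rule eq_matI)
  fix p q
  assume "p < dim_row (mixed_conj (n*k) ({..<k} \<times> {..<k}) (\<lambda>_. 1 / (real k * real k)) (\<lambda>(a,b). weyl n k a b) Z)"
    and "q < dim_col (mixed_conj (n*k) ({..<k} \<times> {..<k}) (\<lambda>_. 1 / (real k * real k)) (\<lambda>(a,b). weyl n k a b) Z)"
  then have p: "p < n*k" and q: "q < n*k"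
    by simp_all
  then have pm: "p mod k < k" "q mod k < k"
    by (cases k; simp)+
  define c where "c = complex_of_real (1 / (real k * real k))"
  define \<omega> where "\<omega> = cis (2*pi/k)"
  let ?Zs = "\<lambda>a. Z $$ (cyclic_shift k a p, cyclic_shift k a q)"
  have conj: "(madj (weyl n k a b) * Z * weyl n k a b) $$ (p,q)
      = cnj (\<omega> ^ (b * (p mod k))) * ?Zs a * \<omega> ^ (b * (q mod k))" for a b
    unfolding weyl_def \<omega>_def by (rule index_conj_monomial_mat[OF cyclic_shift_less Z p q])
  have "mixed_conj (n*k) ({..<k} \<times> {..<k}) (\<lambda>_. 1 / (real k * real k)) (\<lambda>(a,b). weyl n k a b) Z $$ (p,q)
      = (\<Sum>a<k. \<Sum>b<k. c * (?Zs a * (cnj (\<omega> ^ (b * (p mod k))) * \<omega> ^ (b * (q mod k)))))"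
    using p q by (simp add: index_mixed_conj sum.cartesian_product' conj c_def mult_ac)
  also have "\<dots> = (\<Sum>a<k. c * ?Zs a * (if p mod k = q mod k then of_nat k else 0))"
    unfolding \<omega>_def sum_roots_unity_orthogonal[OF pm, symmetric]
    by (intro sum.cong refl) (simp add: sum_distrib_left mult.assoc)
  also have "\<dots> = kron (ptrace_norm n k Z) (1\<^sub>m k) $$ (p,q)"
  proof (cases "p mod k = q mod k")
    case False
    then show ?thesis
      by (simp add: index_kron_one_mat[OF ptrace_norm_carrier p q])
  next
    case True
    have "(\<Sum>a<k. ?Zs a) = (\<Sum>a<k. Z $$ (p div k * k + a, q div k * k + a))"
      unfolding cyclic_shift_def True
      using sum_mod_shift[of "\<lambda>a. Z $$ (p div k * k + a, q div k * k + a)" "q mod k" k]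
      by (simp add: add.commute)
    moreover have "p div k < n" "q div k < n"
      using p q by (simp_all add: less_mult_imp_div_less)
    ultimately show ?thesis
      using True pm unfolding index_kron_one_mat[OF ptrace_norm_carrier p q]
      by (simp add: ptrace_norm_def c_def sum_distrib_left[symmetric] sum_divide_distrib[symmetric])
  qed
  finally show "kron (ptrace_norm n k Z) (1\<^sub>m k) $$ (p,q)
      = mixed_conj (n*k) ({..<k} \<times> {..<k}) (\<lambda>_. 1 / (real k * real k)) (\<lambda>(a,b). weyl n k a b) Z $$ (p,q)"
    by (rule sym)
qed (simp_all add: kron_def ptrace_norm_def)

lemma dim_S_map [simp]: "dim_row (S_map k y) = k" "dim_col (S_map k y) = k"
  unfolding S_map_def by simp_all

lemma index_S_map_munit:
  assumes "a < k" "b < k" "r < k" "s < k"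
  shows "S_map k (munit k a b) $$ (r,s) = (if a = b \<and> r = s then 1 / of_nat k else 0)"
proof -
  have "mtrace (munit k a b) = (if a = b then 1 else 0)"
    using assms unfolding mtrace_def munit_def by (cases "a = b") (auto intro!: sum.neutral)
  with assms show ?thesis
    unfolding S_map_def by simp
qed

lemma map_tensor_S_map:
  assumes T: "lin_map n T" and Y: "Y \<in> carrier_mat (n*k) (n*k)"
  shows "map_tensor n k T (S_map k) Y = kron (T (ptrace_norm n k Y)) (1\<^sub>m k)"
proof -
  have TE: "T (munit n i j) \<in> carrier_mat n n" for i j
    using T unfolding lin_map_def munit_def by simp
  have TP: "T (ptrace_norm n k Y) \<in> carrier_mat n n"
    using T unfolding lin_map_def by simp
  show ?thesis
  proof (rule eq_matI)
    fix p q
    assume "p < dim_row (kron (T (ptrace_norm n k Y)) (1\<^sub>m k))"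
      and "q < dim_col (kron (T (ptrace_norm n k Y)) (1\<^sub>m k))"
    then have p: "p < n*k" and q: "q < n*k"
      using TP by (simp_all add: kron_def)
    then have pm: "p mod k < k" "q mod k < k"
      by (cases k; simp)+
    have pd: "p div k < n" "q div k < n"
      using p q by (simp_all add: less_mult_imp_div_less)
    define \<delta> where "\<delta> = (if p mod k = q mod k then 1 else (0::complex))"
    have inner: "(\<Sum>a<k. \<Sum>b<k. Y $$ (i*k+a, j*k+b) * kron (T (munit n i j)) (S_map k (munit k a b)) $$ (p,q))
        = ptrace_norm n k Y $$ (i,j) * T (munit n i j) $$ (p div k, q div k) * \<delta>" if "i < n" "j < n" for i j
    proof -
      have "(\<Sum>a<k. \<Sum>b<k. Y $$ (i*k+a, j*k+b) * kron (T (munit n i j)) (S_map k (munit k a b)) $$ (p,q))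
          = (\<Sum>a<k. \<Sum>b<k. if a = b then Y $$ (i*k+a, j*k+a) * T (munit n i j) $$ (p div k, q div k) * \<delta> / of_nat k else 0)"
        using TE[of i j] p q pm by (intro sum.cong refl) (simp add: kron_def index_S_map_munit \<delta>_def)
      also have "\<dots> = ptrace_norm n k Y $$ (i,j) * T (munit n i j) $$ (p div k, q div k) * \<delta>"
        using that by (simp add: ptrace_norm_def sum_distrib_right sum_divide_distrib)
      finally show ?thesis .
    qed
    have "map_tensor n k T (S_map k) Y $$ (p,q)
        = (\<Sum>i<n. \<Sum>j<n. ptrace_norm n k Y $$ (i,j) * T (munit n i j) $$ (p div k, q div k) * \<delta>)"
      using p q inner by (simp add: map_tensor_def)
    also have "\<dots> = T (ptrace_norm n k Y) $$ (p div k, q div k) * \<delta>"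
      by (simp add: lin_map_index[OF T ptrace_norm_carrier pd] sum_distrib_right)
    also have "\<dots> = kron (T (ptrace_norm n k Y)) (1\<^sub>m k) $$ (p,q)"
      by (simp add: index_kron_one_mat[OF TP p q] \<delta>_def)
    finally show "map_tensor n k T (S_map k) Y $$ (p,q) = kron (T (ptrace_norm n k Y)) (1\<^sub>m k) $$ (p,q)" .
  next
    show "dim_row (map_tensor n k T (S_map k) Y) = dim_row (kron (T (ptrace_norm n k Y)) (1\<^sub>m k))"
      and "dim_col (map_tensor n k T (S_map k) Y) = dim_col (kron (T (ptrace_norm n k Y)) (1\<^sub>m k))"
      using TP by (simp_all add: map_tensor_def kron_def)
  qed
qed

theorem corollary3p5:
  fixes n k :: nat and T :: "complex mat \<Rightarrow> complex mat"
  assumes "UCPT n T" and "k \<ge> 1" and "exact_factorization n k T"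
  shows "factorizable_deg n k T"
proof -
  have T: "lin_map n T"
    using assms(1) unfolding UCPT_def by blast
  obtain u where u: "unitary_mat (n*k) u"
    and fac: "\<And>x. x \<in> carrier_mat n n \<Longrightarrow> T x = ptrace_norm n k (madj u * kron x (1\<^sub>m k) * u)"
    using assms(3) unfolding exact_factorization_def by blast
  have twirl: "map_tensor n k T (S_map k) Y = weyl_twirl n k (madj u * weyl_twirl n k Y * u)"
    if Y: "Y \<in> carrier_mat (n*k) (n*k)" for Y
  proof -
    have "map_tensor n k T (S_map k) Y = kron (T (ptrace_norm n k Y)) (1\<^sub>m k)"
      by (rule map_tensor_S_map[OF T Y])
    also have "\<dots> = kron (ptrace_norm n k (madj u * kron (ptrace_norm n k Y) (1\<^sub>m k) * u)) (1\<^sub>m k)"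
      by (simp add: fac)
    also have "\<dots> = weyl_twirl n k (madj u * weyl_twirl n k Y * u)"
      using Y u by (simp add: kron_ptrace_norm_eq_weyl_twirl unitary_mat_carrier)
    finally show ?thesis .
  qed
  show ?thesis
    unfolding factorizable_deg_def by (rule in_conv_Aut_weyl_twirl_comp[OF assms(2) u twirl])
qed

end
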